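(* Let $c_1\ge1$. Let $Q^0$ be the initial cube of the construction (so $Q^0\supset\operatorname{supp}\mu$), and suppose there exist cubes $Q_u,Q_d\in\mathcal D$ contained in $Q^0$ such that $c_1^{-1}\ell(Q^0)\le\operatorname{dist}(Q_u,Q_d)\le c_1\ell(Q^0)$ and $\mu(Q_u)\ge c_1^{-1}\mu(Q^0)$, $\mu(Q_d)\ge c_1^{-1}\mu(Q^0)$. Then $$\|\mathcal R\mu\|_{L^2(\mu)}^2\ge C\,\Theta(Q^0)^2\,\mu(Q^0),$$ where $C>0$ depends only on $c_1$, $s$, $d$ and $c_{sep}$.
   Context: $0<s<d$. $E\subset\mathbb R^d$ is a Cantor set built from a compact $Q^0$ by repeatedly choosing, inside each closed "cube" $Q$ of generation $k$, a finite nonempty family of closed children (the cubes of generation $k+1$), such that each child $Q'$ of $Q$ satisfies $\frac18\ell(Q)\le\ell(Q')\le\frac13\ell(Q)$, where $\ell(Q)=\operatorname{diam}(Q)$, and distinct children of $Q$ are at distance $\ge c_{sep}\ell(Q)$. $\mathcal D$ is the family of all such cubes. $\mu$ is a finite Borel measure supported on $E$ with $\mu(Q)>0$ for all $Q\in\mathcal D$. $\Theta(Q)=\mu(Q)/\ell(Q)^s$. $\mathcal R\mu(x)=\int\frac{x-y}{|x-y|^{s+1}}\,d\mu(y)$, with $\|\mathcal R\mu\|_{L^2(\mu)}$ understood via truncations $\mathcal R_\varepsilon\mu(x)=\int_{|x-y|>\varepsilon}\frac{x-y}{|x-y|^{s+1}}d\mu(y)$ uniformly in $\varepsilon>0$.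 *)

theory Defs
  imports "HOL-Analysis.Analysis"
begin

text \<open>The side length of a cube is its diameter.\<close>

definition cantor_construction ::
  "real \<Rightarrow> 'a::euclidean_space set \<Rightarrow> (nat \<Rightarrow> 'a set set) \<Rightarrow> (nat \<Rightarrow> 'a set \<Rightarrow> 'a set set) \<Rightarrow> bool" where
  "cantor_construction csep Q0 gen ch \<longleftrightarrow>
     compact Q0 \<and> gen 0 = {Q0} \<and>
     (\<forall>k. gen (Suc k) = (\<Union>Q\<in>gen k. ch k Q)) \<and>
     (\<forall>k. \<forall>Q\<in>gen k.
        finite (ch k Q) \<and> ch k Q \<noteq> {} \<and>
        (\<forall>Q'\<in>ch k Q. closed Q' \<and> Q' \<subseteq> Q \<and>
            diameter Q / 8 \<le> diameter Q' \<and> diameter Q' \<le> diameter Q / 3) \<and>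
        (\<forall>Q1\<in>ch k Q. \<forall>Q2\<in>ch k Q. Q1 \<noteq> Q2 \<longrightarrow> setdist Q1 Q2 \<ge> csep * diameter Q))"

definition cubes :: "(nat \<Rightarrow> 'a set set) \<Rightarrow> 'a set set" where
  "cubes gen = (\<Union>k. gen k)"

definition cantor_set :: "(nat \<Rightarrow> 'a set set) \<Rightarrow> 'a set" where
  "cantor_set gen = (\<Inter>k. \<Union>(gen k))"

definition Theta :: "real \<Rightarrow> 'a::euclidean_space measure \<Rightarrow> 'a set \<Rightarrow> real" where
  "Theta s \<mu> Q = measure \<mu> Q / diameter Q powr s"

definition riesz_trunc :: "real \<Rightarrow> 'a::euclidean_space measure \<Rightarrow> real \<Rightarrow> 'a \<Rightarrow> 'a" where
  "riesz_trunc s \<mu> \<epsilon> x =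
     (\<integral>y. (if \<epsilon> < dist x y then (norm (x - y) powr (-(s + 1))) *\<^sub>R (x - y) else 0) \<partial>\<mu>)"

definition riesz_L2sq :: "real \<Rightarrow> 'a::euclidean_space measure \<Rightarrow> ennreal" where
  "riesz_L2sq s \<mu> = (SUP \<epsilon>\<in>{0<..}. \<integral>\<^sup>+ x. ennreal ((norm (riesz_trunc s \<mu> \<epsilon> x))\<^sup>2) \<partial>\<mu>)"

end

theory Submission
  imports Defs
begin

text \<open>Truncate the kernel at \<open>\<epsilon> = \<ell>(Q0)/(2 c1)\<close> and pair \<open>R\<^sub>\<epsilon>\<mu>\<close> with the bounded
  field \<open>V(x) = 1\<^sub>Q\<^sub>0(x) (x - a)\<close> for some \<open>a \<in> Q0\<close>. By antisymmetry of the kernel, the pairing is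
  half the double integral of \<open>K\<^sub>\<epsilon>(x,y) \<bullet> (x - y)\<close> over \<open>Q0 \<times> Q0\<close>. That integrand is
  \<open>|x - y| powr (1 - s)\<close> or \<open>0\<close>, so it is nonnegative and bounded below by a multiple of
  \<open>\<ell>(Q0) powr (1 - s)\<close> on \<open>Qu \<times> Qd\<close>; the pairing is therefore at least a multiple of
  \<open>\<ell>(Q0) powr (1 - s) \<mu>(Q0)\<^sup>2\<close>. As \<open>|V| \<le> \<ell>(Q0)\<close>, it is also at most \<open>\<ell>(Q0)\<close> times the
  \<open>L\<^sup>1(\<mu>)\<close> norm of \<open>R\<^sub>\<epsilon>\<mu>\<close>, and Cauchy-Schwarz turns this \<open>L\<^sup>1\<close> bound into the \<open>L\<^sup>2\<close> bound.\<close>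

definition riesz_kernel :: "real \<Rightarrow> real \<Rightarrow> 'a::euclidean_space \<Rightarrow> 'a \<Rightarrow> 'a" where
  "riesz_kernel s \<epsilon> x y = (if \<epsilon> < dist x y then norm (x - y) powr (-(s + 1)) *\<^sub>R (x - y) else 0)"

lemma riesz_trunc_eq_integral_kernel: "riesz_trunc s \<mu> \<epsilon> x = (\<integral>y. riesz_kernel s \<epsilon> x y \<partial>\<mu>)"
  by (simp add: riesz_trunc_def riesz_kernel_def)

lemma riesz_kernel_swap: "riesz_kernel s \<epsilon> y x = - riesz_kernel s \<epsilon> x y"
  by (simp add: riesz_kernel_def dist_commute norm_minus_commute scaleR_diff_right)

lemma riesz_kernel_inner_symmetrize:
  "riesz_kernel s \<epsilon> x y \<bullet> (x - a) + riesz_kernel s \<epsilon> y x \<bullet> (y - a) = riesz_kernel s \<epsilon> x y \<bullet> (x - y)"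
  unfolding riesz_kernel_swap[of s \<epsilon> y x] by (simp add: inner_diff_right)

lemma inner_riesz_kernel_diff:
  "riesz_kernel s \<epsilon> x y \<bullet> (x - y) = (if \<epsilon> < dist x y then dist x y powr (1 - s) else 0)"
proof (cases "\<epsilon> < dist x y \<and> x \<noteq> y")
  case True
  then have "riesz_kernel s \<epsilon> x y \<bullet> (x - y) = dist x y powr (-(s + 1)) * dist x y powr 2"
    by (simp add: riesz_kernel_def dist_norm power2_norm_eq_inner[symmetric] powr_realpow)
  also have "\<dots> = dist x y powr (-(s + 1) + 2)"
    by (simp only: powr_add)
  finally show ?thesis
    using True by simp
qed (auto simp: riesz_kernel_def)

lemma norm_riesz_kernel_le:
  assumes "0 < \<epsilon>" "0 < s"
  shows "norm (riesz_kernel s \<epsilon> x y) \<le> \<epsilon> powr (-s)"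
proof (cases "\<epsilon> < dist x y")
  case True
  then have "0 < norm (x - y)" using assms by (auto simp: dist_norm)
  then have "norm (riesz_kernel s \<epsilon> x y) = norm (x - y) powr (-(s + 1)) * norm (x - y) powr 1"
    using True by (simp add: riesz_kernel_def)
  also have "\<dots> = norm (x - y) powr (-s)"
    by (simp only: powr_add[symmetric]) simp
  also have "\<dots> \<le> \<epsilon> powr (-s)"
    using True assms by (intro powr_mono2') (auto simp: dist_norm)
  finally show ?thesis .
qed (simp add: riesz_kernel_def)

lemma borel_measurable_riesz_kernel_right[measurable]:
  "riesz_kernel s \<epsilon> x \<in> borel_measurable borel"
  unfolding riesz_kernel_def by measurable

lemma borel_measurable_riesz_kernel[measurable]:
  "(\<lambda>p. riesz_kernel s \<epsilon> (fst p) (snd p)) \<in> borel_measurable (borel \<Otimes>\<^sub>M borel)"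
  unfolding riesz_kernel_def by measurable

lemma scaled_powr_le_powr:
  fixes D c r t :: real
  assumes "0 < D" "1 \<le> c" "D / c \<le> r" "r \<le> D"
  shows "c powr (-\<bar>t\<bar>) * D powr t \<le> r powr t"
proof (cases "0 \<le> t")
  case True
  have "c powr (-\<bar>t\<bar>) * D powr t = D powr t / c powr t"
    using True by (simp add: powr_minus divide_inverse mult.commute)
  also have "\<dots> = (D / c) powr t"
    using assms by (simp add: powr_divide)
  also have "\<dots> \<le> r powr t"
    using True assms by (intro powr_mono2) auto
  finally show ?thesis .
next
  case False
  have "0 < r"
    using assms divide_pos_pos[of D c] by linarith
  have "c powr (-\<bar>t\<bar>) \<le> 1"
    using powr_mono[of "-\<bar>t\<bar>" 0 c] assms by simp
  then have "c powr (-\<bar>t\<bar>) * D powr t \<le> D powr t"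
    by (simp add: mult_left_le_one_le)
  also have "\<dots> \<le> r powr t"
    using False \<open>0 < r\<close> assms by (intro powr_mono2') auto
  finally show ?thesis .
qed

lemma integral_ge_on_Times:
  fixes g :: "'a \<times> 'b \<Rightarrow> real"
  assumes "finite_measure M" "finite_measure N" "integrable (M \<Otimes>\<^sub>M N) g" "\<And>p. 0 \<le> g p"
    and "B \<in> sets M" "C \<in> sets N" "\<And>x y. x \<in> B \<Longrightarrow> y \<in> C \<Longrightarrow> m \<le> g (x, y)"
  shows "m * (measure M B * measure N C) \<le> integral\<^sup>L (M \<Otimes>\<^sub>M N) g"
proof -
  interpret M: finite_measure M by (rule assms(1))
  interpret N: finite_measure N by (rule assms(2))
  interpret pair_sigma_finite M N ..
  interpret MN: finite_measure "M \<Otimes>\<^sub>M N"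
    using assms(2,1) by (rule finite_measure_pair_measure)
  have BC: "B \<times> C \<in> sets (M \<Otimes>\<^sub>M N)"
    using assms(5,6) by simp
  have "m * (measure M B * measure N C) = m * measure (M \<Otimes>\<^sub>M N) (B \<times> C)"
    using N.emeasure_pair_measure_Times[OF assms(5,6)] by (simp add: measure_def enn2real_mult)
  also have "\<dots> = (\<integral>p. m * indicator (B \<times> C) p \<partial>(M \<Otimes>\<^sub>M N))"
    using sets.sets_into_space[OF BC] by (simp add: Int_absorb2)
  also have "\<dots> \<le> integral\<^sup>L (M \<Otimes>\<^sub>M N) g"
  proof (rule integral_mono)
    show "integrable (M \<Otimes>\<^sub>M N) (\<lambda>p. m * indicator (B \<times> C) p)"
      using integrable_real_indicator[OF BC] by (simp add: MN.emeasure_real less_top[symmetric])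
  qed (use assms(3,4,7) in \<open>auto simp: indicator_def\<close>)
  finally show ?thesis .
qed

lemma (in finite_measure) integral_norm_sq_le_nn_integral:
  fixes f :: "'a \<Rightarrow> 'b::{banach, second_countable_topology}"
  assumes "integrable M f"
  shows "ennreal ((\<integral>x. norm (f x) \<partial>M)\<^sup>2 / measure M (space M))
    \<le> (\<integral>\<^sup>+x. ennreal ((norm (f x))\<^sup>2) \<partial>M)"
proof -
  define L where "L = (\<integral>x. norm (f x) \<partial>M)"
  define N where "N = (\<integral>\<^sup>+x. ennreal ((norm (f x))\<^sup>2) \<partial>M)"
  have "(\<lambda>x. ennreal (norm (f x))) \<in> borel_measurable M"
    using borel_measurable_integrable[OF assms] by measurable
  then have "(\<integral>\<^sup>+x. ennreal (norm (f x)) * 1 \<partial>M)\<^sup>2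
      \<le> (\<integral>\<^sup>+x. ennreal (norm (f x)) ^ 2 \<partial>M) * (\<integral>\<^sup>+x. 1 ^ 2 \<partial>M)"
    by (rule Cauchy_Schwarz_nn_integral) simp
  moreover have "(\<integral>\<^sup>+x. ennreal (norm (f x)) \<partial>M) = ennreal L"
    unfolding L_def using assms by (intro nn_integral_eq_integral) auto
  moreover have "(\<integral>\<^sup>+x. ennreal (norm (f x)) ^ 2 \<partial>M) = N"
    unfolding N_def by (simp add: ennreal_power)
  moreover have "(\<integral>\<^sup>+x. 1 ^ 2 \<partial>M) = ennreal (measure M (space M))"
    by (simp add: emeasure_eq_measure)
  moreover have "0 \<le> L"
    unfolding L_def by simp
  ultimately have CS: "ennreal (L\<^sup>2) \<le> N * ennreal (measure M (space M))"
    by (simp add: ennreal_power[symmetric])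
  show ?thesis
  proof (cases N)
    case (real n)
    then have "L\<^sup>2 \<le> n * measure M (space M)"
      using CS by (simp add: ennreal_mult[symmetric])
    then have "L\<^sup>2 / measure M (space M) \<le> n"
      using real by (cases "measure M (space M) = 0") (simp_all add: divide_le_eq)
    then show ?thesis
      using real by (simp add: L_def N_def)
  qed (simp add: N_def)
qed

lemma (in sigma_finite_measure) integral_pair_symmetrize:
  fixes G :: "'a \<times> 'a \<Rightarrow> real"
  assumes G: "integrable (M \<Otimes>\<^sub>M M) G"
  shows "2 * integral\<^sup>L (M \<Otimes>\<^sub>M M) G = (\<integral>p. G p + G (snd p, fst p) \<partial>(M \<Otimes>\<^sub>M M))"
proof -
  interpret pair_sigma_finite M M ..
  have "integral\<^sup>L (M \<Otimes>\<^sub>M M) G = (\<integral>p. G (snd p, fst p) \<partial>(M \<Otimes>\<^sub>M M))"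
    using integral_product_swap[OF borel_measurable_integrable[OF G]] by (simp add: case_prod_beta')
  moreover have "integrable (M \<Otimes>\<^sub>M M) (\<lambda>p. G (snd p, fst p))"
    using integrable_product_swap[OF G] by (simp add: case_prod_beta')
  ultimately show ?thesis
    using G by (simp add: Bochner_Integration.integral_add)
qed

locale truncated_riesz = finite_measure \<mu>
  for \<mu> :: "'a::euclidean_space measure" +
  fixes s \<epsilon> :: real
  assumes sets_eq_borel: "sets \<mu> = sets borel"
    and s_pos: "0 < s" and eps_pos: "0 < \<epsilon>"
begin

lemma borel_measurable_eq: "borel_measurable \<mu> = borel_measurable borel"
  by (rule measurable_cong_sets[OF sets_eq_borel refl])

lemma borel_measurable_pair_eq:
  "borel_measurable (\<mu> \<Otimes>\<^sub>M \<mu>) = borel_measurable (borel \<Otimes>\<^sub>M borel)"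
  by (rule measurable_cong_sets[OF sets_pair_measure_cong[OF sets_eq_borel sets_eq_borel] refl])

lemma integrable_riesz_kernel: "integrable \<mu> (riesz_kernel s \<epsilon> x)"
  using norm_riesz_kernel_le[OF eps_pos s_pos]
  by (intro integrable_const_bound) (auto simp: borel_measurable_eq)

lemma norm_riesz_trunc_le: "norm (riesz_trunc s \<mu> \<epsilon> x) \<le> \<epsilon> powr (-s) * measure \<mu> (space \<mu>)"
proof -
  have "norm (riesz_trunc s \<mu> \<epsilon> x) \<le> (\<integral>y. norm (riesz_kernel s \<epsilon> x y) \<partial>\<mu>)"
    unfolding riesz_trunc_eq_integral_kernel by (rule integral_norm_bound)
  also have "\<dots> \<le> (\<integral>y. \<epsilon> powr (-s) \<partial>\<mu>)"
    using integrable_riesz_kernel norm_riesz_kernel_le[OF eps_pos s_pos] by (intro integral_mono) auto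
  finally show ?thesis by (simp add: mult.commute)
qed

lemma borel_measurable_riesz_trunc[measurable]: "riesz_trunc s \<mu> \<epsilon> \<in> borel_measurable borel"
proof -
  have "(\<lambda>p. riesz_kernel s \<epsilon> (fst p) (snd p)) \<in> borel_measurable (\<mu> \<Otimes>\<^sub>M \<mu>)"
    unfolding borel_measurable_pair_eq by (rule borel_measurable_riesz_kernel)
  then have "riesz_trunc s \<mu> \<epsilon> \<in> borel_measurable \<mu>"
    unfolding riesz_trunc_eq_integral_kernel[abs_def]
    by (intro borel_measurable_lebesgue_integral) (simp add: case_prod_beta')
  then show ?thesis
    unfolding borel_measurable_eq .
qed

lemma integrable_riesz_trunc: "integrable \<mu> (riesz_trunc s \<mu> \<epsilon>)"
  using norm_riesz_trunc_le by (intro integrable_const_bound) (auto simp: borel_measurable_eq)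

lemma riesz_L2sq_ge_L1_sq:
  "ennreal ((\<integral>x. norm (riesz_trunc s \<mu> \<epsilon> x) \<partial>\<mu>)\<^sup>2 / measure \<mu> (space \<mu>)) \<le> riesz_L2sq s \<mu>"
proof -
  have "ennreal ((\<integral>x. norm (riesz_trunc s \<mu> \<epsilon> x) \<partial>\<mu>)\<^sup>2 / measure \<mu> (space \<mu>))
      \<le> (\<integral>\<^sup>+x. ennreal ((norm (riesz_trunc s \<mu> \<epsilon> x))\<^sup>2) \<partial>\<mu>)"
    by (rule integral_norm_sq_le_nn_integral[OF integrable_riesz_trunc])
  also have "\<dots> \<le> riesz_L2sq s \<mu>"
    unfolding riesz_L2sq_def using eps_pos by (intro SUP_upper) simp
  finally show ?thesis .
qed

lemma riesz_trunc_inner_symmetrization: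
  assumes A: "A \<in> sets borel" "bounded A" and AE_A: "AE x in \<mu>. x \<in> A"
  shows "2 * (\<integral>x. riesz_trunc s \<mu> \<epsilon> x \<bullet> (indicator A x *\<^sub>R (x - a)) \<partial>\<mu>)
    = (\<integral>p. indicator (A \<times> A) p * (riesz_kernel s \<epsilon> (fst p) (snd p) \<bullet> (fst p - snd p)) \<partial>(\<mu> \<Otimes>\<^sub>M \<mu>))"
proof -
  interpret P: pair_sigma_finite \<mu> \<mu> ..
  interpret \<mu>\<mu>: finite_measure "\<mu> \<Otimes>\<^sub>M \<mu>"
    using finite_measure_axioms finite_measure_axioms by (rule finite_measure_pair_measure)
  note A(1)[measurable]
  obtain b where b: "\<And>x. x \<in> A \<Longrightarrow> norm (x - a) \<le> b"
    using A(2) by (auto simp: bounded_any_center[of A a] dist_norm norm_minus_commute)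
  define V where "V x = indicator A x *\<^sub>R (x - a)" for x
  have norm_V: "norm (V x) \<le> \<bar>b\<bar>" for x
    using b[of x] by (auto simp: V_def indicator_def)
  define G where "G p = indicator A (snd p) * (riesz_kernel s \<epsilon> (fst p) (snd p) \<bullet> V (fst p))" for p
  have G_meas: "G \<in> borel_measurable (\<mu> \<Otimes>\<^sub>M \<mu>)"
    unfolding borel_measurable_pair_eq G_def V_def by measurable
  have "norm (G p) \<le> \<epsilon> powr (-s) * \<bar>b\<bar>" for p
  proof -
    have "norm (G p) \<le> \<bar>riesz_kernel s \<epsilon> (fst p) (snd p) \<bullet> V (fst p)\<bar>"
      by (simp add: G_def indicator_def)
    also have "\<dots> \<le> norm (riesz_kernel s \<epsilon> (fst p) (snd p)) * norm (V (fst p))"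
      by (rule Cauchy_Schwarz_ineq2)
    also have "\<dots> \<le> \<epsilon> powr (-s) * \<bar>b\<bar>"
      using norm_riesz_kernel_le[OF eps_pos s_pos] norm_V by (intro mult_mono) auto
    finally show ?thesis .
  qed
  with G_meas have G_int: "integrable (\<mu> \<Otimes>\<^sub>M \<mu>) G"
    by (intro \<mu>\<mu>.integrable_const_bound[where B="\<epsilon> powr (-s) * \<bar>b\<bar>"] AE_I2) auto
  have fibre: "riesz_trunc s \<mu> \<epsilon> x \<bullet> V x = (\<integral>y. G (x, y) \<partial>\<mu>)" for x
  proof -
    have "riesz_trunc s \<mu> \<epsilon> x \<bullet> V x = (\<integral>y. riesz_kernel s \<epsilon> x y \<bullet> V x \<partial>\<mu>)"
      unfolding riesz_trunc_eq_integral_kernel using integrable_riesz_kernel by simp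
    also have "\<dots> = (\<integral>y. G (x, y) \<partial>\<mu>)"
    proof (rule integral_cong_AE)
      show "AE y in \<mu>. riesz_kernel s \<epsilon> x y \<bullet> V x = G (x, y)"
        using AE_A by eventually_elim (simp add: G_def)
    qed (simp_all add: G_def V_def borel_measurable_eq)
    finally show ?thesis .
  qed
  have swap: "G p + G (snd p, fst p)
      = indicator (A \<times> A) p * (riesz_kernel s \<epsilon> (fst p) (snd p) \<bullet> (fst p - snd p))" for p
    using riesz_kernel_inner_symmetrize[of s \<epsilon> "fst p" "snd p" a]
    by (cases "fst p \<in> A"; cases "snd p \<in> A") (simp_all add: G_def V_def indicator_def mem_Times_iff)
  have "2 * (\<integral>x. riesz_trunc s \<mu> \<epsilon> x \<bullet> V x \<partial>\<mu>) = 2 * integral\<^sup>L (\<mu> \<Otimes>\<^sub>M \<mu>) G"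
    unfolding fibre by (simp add: P.integral_fst'[OF G_int])
  also have "\<dots> = (\<integral>p. G p + G (snd p, fst p) \<partial>(\<mu> \<Otimes>\<^sub>M \<mu>))"
    by (rule integral_pair_symmetrize[OF G_int])
  also have "\<dots> = (\<integral>p. indicator (A \<times> A) p
      * (riesz_kernel s \<epsilon> (fst p) (snd p) \<bullet> (fst p - snd p)) \<partial>(\<mu> \<Otimes>\<^sub>M \<mu>))"
    by (simp only: swap)
  finally show ?thesis
    by (simp only: V_def)
qed

lemma integral_riesz_kernel_energy_ge:
  fixes Q0 Qu Qd :: "'a set" and c :: real
  assumes Q0: "compact Q0" and Qu: "closed Qu" "Qu \<subseteq> Q0" and Qd: "closed Qd" "Qd \<subseteq> Q0"
    and c: "1 \<le> c" and sep: "diameter Q0 / c \<le> setdist Qu Qd" and eps: "\<epsilon> < diameter Q0 / c"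
  shows "c powr (-\<bar>1 - s\<bar>) * diameter Q0 powr (1 - s) * (measure \<mu> Qu * measure \<mu> Qd)
    \<le> (\<integral>p. indicator (Q0 \<times> Q0) p * (riesz_kernel s \<epsilon> (fst p) (snd p) \<bullet> (fst p - snd p)) \<partial>(\<mu> \<Otimes>\<^sub>M \<mu>))"
proof (rule integral_ge_on_Times)
  interpret \<mu>\<mu>: finite_measure "\<mu> \<Otimes>\<^sub>M \<mu>"
    using finite_measure_axioms finite_measure_axioms by (rule finite_measure_pair_measure)
  define D where "D = diameter Q0"
  have "0 < D / c"
    using eps eps_pos unfolding D_def by linarith
  then have D: "0 < D"
    using c by (simp add: zero_less_divide_iff)
  have dist_le_D: "dist x y \<le> D" if "x \<in> Q0" "y \<in> Q0" for x y
    unfolding D_def using diameter_bounded_bound[OF compact_imp_bounded[OF Q0] that] .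
  have Q0_borel[measurable]: "Q0 \<in> sets borel"
    using Q0 by (simp add: borel_compact)
  let ?H = "\<lambda>p. indicator (Q0 \<times> Q0) p * (riesz_kernel s \<epsilon> (fst p) (snd p) \<bullet> (fst p - snd p))"
  have "norm (?H p) \<le> \<epsilon> powr (-s) * D" for p
  proof -
    have "norm (?H p) \<le> indicator (Q0 \<times> Q0) p * (norm (riesz_kernel s \<epsilon> (fst p) (snd p)) * dist (fst p) (snd p))"
      by (simp add: indicator_def dist_norm Cauchy_Schwarz_ineq2)
    also have "\<dots> \<le> \<epsilon> powr (-s) * D"
      using norm_riesz_kernel_le[OF eps_pos s_pos] dist_le_D D
      by (auto simp: indicator_def mem_Times_iff intro!: mult_mono)
    finally show ?thesis .
  qed
  moreover have "?H \<in> borel_measurable (\<mu> \<Otimes>\<^sub>M \<mu>)"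
    unfolding borel_measurable_pair_eq by measurable
  ultimately show "integrable (\<mu> \<Otimes>\<^sub>M \<mu>) ?H"
    by (intro \<mu>\<mu>.integrable_const_bound[where B="\<epsilon> powr (-s) * D"] AE_I2) auto
  show "0 \<le> ?H p" for p
    by (simp add: inner_riesz_kernel_diff)
  show "c powr (-\<bar>1 - s\<bar>) * diameter Q0 powr (1 - s) \<le> ?H (x, y)" if "x \<in> Qu" "y \<in> Qd" for x y
  proof -
    have far: "D / c \<le> dist x y"
      using sep setdist_le_dist[OF that] unfolding D_def by linarith
    have near: "dist x y \<le> D"
      using dist_le_D that Qu(2) Qd(2) by blast
    have "c powr (-\<bar>1 - s\<bar>) * D powr (1 - s) \<le> dist x y powr (1 - s)"
      by (rule scaled_powr_le_powr[OF D c far near])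
    moreover have "\<epsilon> < dist x y"
      using eps far unfolding D_def by linarith
    ultimately show ?thesis
      using that Qu(2) Qd(2) by (auto simp: D_def inner_riesz_kernel_diff indicator_def)
  qed
  show "Qu \<in> sets \<mu>" "Qd \<in> sets \<mu>"
    using Qu(1) Qd(1) by (simp_all add: sets_eq_borel)
qed (rule finite_measure_axioms)+

lemma integral_inner_riesz_trunc_le:
  assumes V: "V \<in> borel_measurable borel" "\<And>x. norm (V x) \<le> B"
  shows "(\<integral>x. riesz_trunc s \<mu> \<epsilon> x \<bullet> V x \<partial>\<mu>) \<le> B * (\<integral>x. norm (riesz_trunc s \<mu> \<epsilon> x) \<partial>\<mu>)"
proof -
  let ?f = "riesz_trunc s \<mu> \<epsilon>"
  have "(\<integral>x. ?f x \<bullet> V x \<partial>\<mu>) \<le> (\<integral>x. B * norm (?f x) \<partial>\<mu>)"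
  proof (rule integral_mono)
    have "norm (?f x \<bullet> V x) \<le> \<epsilon> powr (-s) * measure \<mu> (space \<mu>) * B" for x
    proof -
      have "norm (?f x \<bullet> V x) \<le> norm (?f x) * norm (V x)"
        by (simp add: Cauchy_Schwarz_ineq2)
      also have "\<dots> \<le> \<epsilon> powr (-s) * measure \<mu> (space \<mu>) * B"
        using norm_riesz_trunc_le V(2) by (intro mult_mono) auto
      finally show ?thesis .
    qed
    moreover have "(\<lambda>x. ?f x \<bullet> V x) \<in> borel_measurable \<mu>"
      using V(1) unfolding borel_measurable_eq by measurable
    ultimately show "integrable \<mu> (\<lambda>x. ?f x \<bullet> V x)"
      by (intro integrable_const_bound[where B="\<epsilon> powr (-s) * measure \<mu> (space \<mu>) * B"] AE_I2) auto
    show "integrable \<mu> (\<lambda>x. B * norm (?f x))"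
      using integrable_riesz_trunc by simp
    show "?f x \<bullet> V x \<le> B * norm (?f x)" for x
      using norm_cauchy_schwarz[of "?f x" "V x"] mult_left_mono[OF V(2)[of x] norm_ge_zero[of "?f x"]]
      by (simp add: mult.commute)
  qed
  then show ?thesis
    by simp
qed

lemma integral_norm_riesz_trunc_ge:
  fixes Q0 Qu Qd :: "'a set" and c :: real
  assumes Q0: "compact Q0" "AE x in \<mu>. x \<in> Q0"
    and Qu: "closed Qu" "Qu \<subseteq> Q0" "measure \<mu> Q0 / c \<le> measure \<mu> Qu"
    and Qd: "closed Qd" "Qd \<subseteq> Q0" "measure \<mu> Q0 / c \<le> measure \<mu> Qd"
    and c: "1 \<le> c" and sep: "diameter Q0 / c \<le> setdist Qu Qd" and eps: "\<epsilon> < diameter Q0 / c"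
  shows "c powr (-\<bar>1 - s\<bar>) / (2 * c\<^sup>2) * (measure \<mu> Q0)\<^sup>2 / diameter Q0 powr s
    \<le> (\<integral>x. norm (riesz_trunc s \<mu> \<epsilon> x) \<partial>\<mu>)"
proof -
  define D where "D = diameter Q0"
  define M where "M = measure \<mu> Q0"
  define L where "L = (\<integral>x. norm (riesz_trunc s \<mu> \<epsilon> x) \<partial>\<mu>)"
  define m where "m = c powr (-\<bar>1 - s\<bar>) * D powr (1 - s)"
  have "0 < D / c"
    using eps eps_pos unfolding D_def by linarith
  then have D: "0 < D"
    using c by (simp add: zero_less_divide_iff)
  then obtain a where a: "a \<in> Q0"
    unfolding D_def by (metis diameter_empty equals0I less_irrefl)
  have Q0_borel[measurable]: "Q0 \<in> sets borel"
    using Q0(1) by (simp add: borel_compact)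
  have norm_V: "norm (indicator Q0 x *\<^sub>R (x - a)) \<le> D" for x
    using diameter_bounded_bound[OF compact_imp_bounded[OF Q0(1)] _ a, of x] D
    by (auto simp: D_def indicator_def dist_norm)
  have "m * (measure \<mu> Qu * measure \<mu> Qd)
      \<le> (\<integral>p. indicator (Q0 \<times> Q0) p * (riesz_kernel s \<epsilon> (fst p) (snd p) \<bullet> (fst p - snd p)) \<partial>(\<mu> \<Otimes>\<^sub>M \<mu>))"
    unfolding m_def D_def by (rule integral_riesz_kernel_energy_ge[OF Q0(1) Qu(1,2) Qd(1,2) c sep eps])
  also have "\<dots> = 2 * (\<integral>x. riesz_trunc s \<mu> \<epsilon> x \<bullet> (indicator Q0 x *\<^sub>R (x - a)) \<partial>\<mu>)"
    by (rule riesz_trunc_inner_symmetrization[OF Q0_borel compact_imp_bounded[OF Q0(1)] Q0(2), symmetric])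
  also have "\<dots> \<le> 2 * (D * L)"
    unfolding L_def using norm_V by (intro mult_left_mono integral_inner_riesz_trunc_le) auto
  finally have key: "m * (measure \<mu> Qu * measure \<mu> Qd) \<le> 2 * (D * L)" .
  have "(M / c)\<^sup>2 \<le> measure \<mu> Qu * measure \<mu> Qd"
    using Qu(3) Qd(3) c unfolding M_def power2_eq_square by (intro mult_mono) auto
  moreover have "0 \<le> m"
    by (simp add: m_def)
  ultimately have "m * (M / c)\<^sup>2 \<le> 2 * (D * L)"
    using key by (meson mult_left_mono order_trans)
  moreover have "m * (M / c)\<^sup>2 = 2 * (D * (c powr (-\<bar>1 - s\<bar>) / (2 * c\<^sup>2) * M\<^sup>2 / D powr s))"
    using D c by (simp add: m_def powr_diff power_divide field_simps)
  ultimately have "D * (c powr (-\<bar>1 - s\<bar>) / (2 * c\<^sup>2) * M\<^sup>2 / D powr s) \<le> D * L"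
    by linarith
  then show ?thesis
    using D unfolding D_def M_def L_def by (rule mult_left_le_imp_le)
qed

end

lemma cantor_construction_compact:
  assumes "cantor_construction csep Q0 gen ch" "Q \<in> gen k"
  shows "compact Q"
  using assms(2)
proof (induction k arbitrary: Q)
  case 0
  then show ?case
    using assms(1) by (simp add: cantor_construction_def)
next
  case (Suc k)
  then obtain P where P: "P \<in> gen k" "Q \<in> ch k P"
    using assms(1) by (auto simp: cantor_construction_def)
  then have "closed Q" "Q \<subseteq> P"
    using assms(1) unfolding cantor_construction_def by blast+
  then show ?case
    using Suc.IH[OF P(1)] by (metis compact_Int_closed inf.absorb_iff2)
qed

lemma cantor_construction_finite_gen:
  assumes "cantor_construction csep Q0 gen ch"
  shows "finite (gen k)"
proof (induction k)
  case (Suc k)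
  then show ?case
    using assms by (simp add: cantor_construction_def)
qed (use assms in \<open>simp add: cantor_construction_def\<close>)

lemma closed_cantor_set:
  assumes "cantor_construction csep Q0 gen ch"
  shows "closed (cantor_set gen)"
  unfolding cantor_set_def
proof (intro closed_INT ballI closed_Union)
  fix k
  show "finite (gen k)"
    by (rule cantor_construction_finite_gen[OF assms])
  show "closed Q" if "Q \<in> gen k" for Q
    using cantor_construction_compact[OF assms that] by (rule compact_imp_closed)
qed

lemma closed_cube:
  assumes "cantor_construction csep Q0 gen ch" "Q \<in> cubes gen"
  shows "closed Q"
  using assms cantor_construction_compact compact_imp_closed unfolding cubes_def by blast

lemma AE_in_initial_cube:
  assumes cc: "cantor_construction csep Q0 gen ch" and sets: "sets \<mu> = sets borel"
    and null: "emeasure \<mu> (UNIV - cantor_set gen) = 0"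
  shows "AE x in \<mu>. x \<in> Q0"
proof (rule AE_I)
  have "gen 0 = {Q0}"
    using cc by (simp add: cantor_construction_def)
  then show "{x \<in> space \<mu>. x \<notin> Q0} \<subseteq> UNIV - cantor_set gen"
    unfolding cantor_set_def by blast
  show "UNIV - cantor_set gen \<in> sets \<mu>"
    using closed_cantor_set[OF cc] sets by auto
qed (rule null)

lemma riesz_L2sq_ge_initial_cube:
  fixes \<mu> :: "'a::euclidean_space measure" and c s :: real
  assumes cc: "cantor_construction csep Q0 gen ch"
    and fin: "finite_measure \<mu>" and sets: "sets \<mu> = sets borel"
    and null: "emeasure \<mu> (UNIV - cantor_set gen) = 0"
    and Qu: "Qu \<in> cubes gen" "Qu \<subseteq> Q0" "measure \<mu> Q0 / c \<le> measure \<mu> Qu"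
    and Qd: "Qd \<in> cubes gen" "Qd \<subseteq> Q0" "measure \<mu> Q0 / c \<le> measure \<mu> Qd"
    and sep: "diameter Q0 / c \<le> setdist Qu Qd" and c: "1 \<le> c" and s: "0 < s"
  shows "ennreal (c powr (-2 * \<bar>1 - s\<bar>) / (4 * c ^ 4) * (Theta s \<mu> Q0)\<^sup>2 * measure \<mu> Q0)
    \<le> riesz_L2sq s \<mu>"
proof (cases "diameter Q0 = 0")
  case True
  then show ?thesis
    using s by (simp add: Theta_def)
next
  case False
  define D where "D = diameter Q0"
  define M where "M = measure \<mu> Q0"
  define \<epsilon> where "\<epsilon> = D / (2 * c)"
  have cQ0: "compact Q0"
    using cc by (simp add: cantor_construction_def)
  have D: "0 < D"
    using False diameter_ge_0[OF compact_imp_bounded[OF cQ0]] unfolding D_def by linarith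
  have "0 < \<epsilon>"
    using D c by (simp add: \<epsilon>_def)
  interpret truncated_riesz \<mu> s \<epsilon>
    by (intro truncated_riesz.intro truncated_riesz_axioms.intro fin sets s \<open>0 < \<epsilon>\<close>)
  have AE_Q0: "AE x in \<mu>. x \<in> Q0"
    by (rule AE_in_initial_cube[OF cc sets null])
  define L where "L = (\<integral>x. norm (riesz_trunc s \<mu> \<epsilon> x) \<partial>\<mu>)"
  define \<kappa> where "\<kappa> = c powr (-\<bar>1 - s\<bar>) / (2 * c\<^sup>2) * M\<^sup>2 / D powr s"
  have "\<kappa> \<le> L"
    unfolding \<kappa>_def L_def D_def M_def
    by (rule integral_norm_riesz_trunc_ge[OF cQ0 AE_Q0 closed_cube[OF cc Qu(1)] Qu(2,3)
          closed_cube[OF cc Qd(1)] Qd(2,3) c sep]) (use D c in \<open>simp add: \<epsilon>_def D_def field_simps\<close>)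
  moreover have "0 \<le> \<kappa>"
    unfolding \<kappa>_def using c by simp
  ultimately have "\<kappa>\<^sup>2 / M \<le> L\<^sup>2 / M"
    unfolding M_def by (intro divide_right_mono power_mono) auto
  moreover have "c powr (-2 * \<bar>1 - s\<bar>) / (4 * c ^ 4) * (Theta s \<mu> Q0)\<^sup>2 * M = \<kappa>\<^sup>2 / M"
  proof -
    have "(c powr (-\<bar>1 - s\<bar>))\<^sup>2 = c powr (-2 * \<bar>1 - s\<bar>)"
      by (simp add: power2_eq_square powr_add[symmetric])
    then show ?thesis
      unfolding \<kappa>_def Theta_def D_def[symmetric] M_def[symmetric]
      by (cases "M = 0") (simp_all add: power2_eq_square field_simps eval_nat_numeral)
  qed
  moreover have "measure \<mu> (space \<mu>) = M"
    unfolding M_def using AE_Q0 cQ0 sets by (intro measure_eq_AE) (auto simp: borel_compact)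
  ultimately have "ennreal (c powr (-2 * \<bar>1 - s\<bar>) / (4 * c ^ 4) * (Theta s \<mu> Q0)\<^sup>2 * M)
      \<le> ennreal (L\<^sup>2 / measure \<mu> (space \<mu>))"
    by (intro ennreal_leI) simp
  also have "\<dots> \<le> riesz_L2sq s \<mu>"
    unfolding L_def by (rule riesz_L2sq_ge_L1_sq)
  finally show ?thesis
    unfolding M_def .
qed

theorem lemma8p3:
  fixes s c1 csep :: real
  assumes "0 < s" "s < real DIM('a::euclidean_space)" "c1 \<ge> 1" "0 < csep"
  shows "\<exists>C>0. \<forall>(Q0::'a set) gen ch (\<mu>::'a measure) Qu Qd.
    cantor_construction csep Q0 gen ch \<and>
    finite_measure \<mu> \<and> sets \<mu> = sets borel \<and>
    emeasure \<mu> (UNIV - cantor_set gen) = 0 \<and>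
    (\<forall>Q\<in>cubes gen. 0 < measure \<mu> Q) \<and>
    Qu \<in> cubes gen \<and> Qd \<in> cubes gen \<and> Qu \<subseteq> Q0 \<and> Qd \<subseteq> Q0 \<and>
    diameter Q0 / c1 \<le> setdist Qu Qd \<and> setdist Qu Qd \<le> c1 * diameter Q0 \<and>
    measure \<mu> Qu \<ge> measure \<mu> Q0 / c1 \<and> measure \<mu> Qd \<ge> measure \<mu> Q0 / c1
    \<longrightarrow> ennreal (C * (Theta s \<mu> Q0)\<^sup>2 * measure \<mu> Q0) \<le> riesz_L2sq s \<mu>"
proof (intro exI[of _ "c1 powr (-2 * \<bar>1 - s\<bar>) / (4 * c1 ^ 4)"] conjI allI impI)
  show "0 < c1 powr (-2 * \<bar>1 - s\<bar>) / (4 * c1 ^ 4)"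
    using assms by simp
qed (use assms(1,3) riesz_L2sq_ge_initial_cube in blast)

end
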